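(* Let $1<p\le n$. Let $\mathbf{X}$ be a deterministic $n\times p$ matrix with $\mathbf{X}^T\mathbf{X}=\mathbf{I}_p$, let $\boldsymbol\beta_0=(\beta_1,0,\dots,0)^T\in\mathbb{R}^p$ with $\beta_1\neq 0$, let $\sigma>0$, and let $\mathbf{y}=\mathbf{X}\boldsymbol\beta_0+\boldsymbol\varepsilon$ with $\varepsilon_1,\dots,\varepsilon_n$ i.i.d. $N(0,\sigma^2)$. Set $\mathbf z=\mathbf{X}^T\mathbf{y}$. For $\lambda\ge 0$ define $$L_p(\lambda)=\frac1n\Big(\beta_1-\operatorname{sgn}(z_1)(|z_1|-\lambda)_+\Big)^2+\frac1n\sum_{j=2}^p\big((|z_j|-\lambda)_+\big)^2,\qquad L_1(\lambda)=\frac1n\Big(\beta_1-\operatorname{sgn}(z_1)(|z_1|-\lambda)_+\Big)^2,$$ and $L_p(\lambda_p^* )=\min_{\lambda\ge0}L_p(\lambda)$, $L_1(\lambda_1^* )=\min_{\lambda\ge 0}L_1(\lambda)$. Then $$\mathbb E\left(\frac{L_p(\lambda_p^* )}{L_1(\lambda_1^* )}\right)=\infty.$$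
   Context: $(a)_+=\max(a,0)$; $\operatorname{sgn}$ is the sign function. The ratio is a nonnegative extended-real random variable with the convention $a/0=+\infty$ for $a>0$ (the value assigned to $0/0$ is any fixed number in $[0,\infty)$, e.g. $1$; it does not affect the conclusion). $L_p(\lambda)$ is the $L_2$ loss of the Lasso estimate $\hat\beta_{\lambda j}=\operatorname{sgn}(z_j)(|z_j|-\lambda)_+$ with all $p$ predictors and $L_1(\lambda)$ the loss using only the first (true) predictor. *)

theory Defs
  imports "HOL-Probability.Probability"
begin

definition pos_part :: "real \<Rightarrow> real" where
  "pos_part a = max a 0"

text \<open>Lasso (soft-thresholding) loss with all p predictors; z is indexed 0..p-1,
  index 0 being the true predictor.\<close>
definition loss_p :: "nat \<Rightarrow> nat \<Rightarrow> real \<Rightarrow> (nat \<Rightarrow> real) \<Rightarrow> real \<Rightarrow> real" where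
  "loss_p n p \<beta>1 z lam =
     (1 / real n) * (\<beta>1 - sgn (z 0) * pos_part (\<bar>z 0\<bar> - lam))\<^sup>2
   + (1 / real n) * (\<Sum>j\<in>{1..<p}. (pos_part (\<bar>z j\<bar> - lam))\<^sup>2)"

definition loss_1 :: "nat \<Rightarrow> real \<Rightarrow> (nat \<Rightarrow> real) \<Rightarrow> real \<Rightarrow> real" where
  "loss_1 n \<beta>1 z lam = (1 / real n) * (\<beta>1 - sgn (z 0) * pos_part (\<bar>z 0\<bar> - lam))\<^sup>2"

definition ext_ratio :: "real \<Rightarrow> real \<Rightarrow> ennreal" where
  "ext_ratio a b = (if b = 0 then (if a > 0 then \<infinity> else 1) else ennreal (a / b))"

end

theory Submission
  imports Defs
begin

text \<open>For noise near the point \<open>\<beta>\<^sub>1 x\<^sub>1 + 3\<bar>\<beta>\<^sub>1\<bar> x\<^sub>2\<close> (with \<open>x\<^sub>j\<close> the columns of X) we get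
  \<open>z\<^sub>1 \<approx> 2\<beta>\<^sub>1\<close> and \<open>z\<^sub>2 \<approx> 3\<bar>\<beta>\<^sub>1\<bar>\<close>. Then the threshold \<open>\<lambda> = \<bar>z\<^sub>1\<bar> - \<bar>\<beta>\<^sub>1\<bar>\<close> makes the oracle loss
  \<open>L\<^sub>1\<close> vanish, whereas for every \<open>\<lambda>\<close> either the first coefficient is shrunk by more than
  \<open>\<bar>\<beta>\<^sub>1\<bar>/2\<close> or the spurious second coefficient exceeds \<open>\<bar>\<beta>\<^sub>1\<bar>/2\<close>, so \<open>L\<^sub>p \<ge> \<beta>\<^sub>1\<^sup>2/(4n)\<close>.
  The ratio is therefore infinite on a box of noise vectors, which has positive
  Gaussian measure.\<close>

lemma Inf_loss_1_eq_0:
  fixes z :: "nat \<Rightarrow> real"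
  assumes "sgn (z 0) = sgn b" and "\<bar>b\<bar> \<le> \<bar>z 0\<bar>"
  shows "Inf (loss_1 n b z ` {0..}) = 0"
proof (rule cInf_eq_minimum)
  have "loss_1 n b z (\<bar>z 0\<bar> - \<bar>b\<bar>) = 0"
    using assms by (simp add: loss_1_def pos_part_def sgn_mult_abs)
  then show "0 \<in> loss_1 n b z ` {0..}"
    using assms(2) by (metis atLeast_iff diff_ge_0_iff_ge image_eqI)
qed (auto simp: loss_1_def)

lemma loss_p_ge:
  fixes z :: "nat \<Rightarrow> real"
  assumes "1 < p" and "\<bar>z 0\<bar> \<le> \<bar>z 1\<bar>"
  shows "b\<^sup>2 / (4 * real n) \<le> loss_p n p b z l"
proof -
  let ?t = "pos_part (\<bar>z 0\<bar> - l)" and ?w = "pos_part (\<bar>z 1\<bar> - l)"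
  let ?spurious = "\<Sum>j\<in>{1..<p}. (pos_part (\<bar>z j\<bar> - l))\<^sup>2"
  have t_nonneg: "0 \<le> ?t" by (simp add: pos_part_def)
  have "\<bar>b\<bar> / 2 \<le> \<bar>b - sgn (z 0) * ?t\<bar> \<or> \<bar>b\<bar> / 2 \<le> ?w"
  proof (cases "?t \<le> \<bar>b\<bar> / 2")
    case True
    have "\<bar>sgn (z 0) * ?t\<bar> \<le> ?t"
      using t_nonneg by (auto simp: abs_mult sgn_if)
    then show ?thesis using True abs_triangle_ineq4[of b "sgn (z 0) * ?t"] by linarith
  next
    case False
    have "?t \<le> ?w" using assms(2) by (simp add: pos_part_def)
    then show ?thesis using False by linarith
  qed
  then have "(\<bar>b\<bar> / 2)\<^sup>2 \<le> (b - sgn (z 0) * ?t)\<^sup>2 + ?w\<^sup>2"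
  proof (elim disjE)
    assume "\<bar>b\<bar> / 2 \<le> \<bar>b - sgn (z 0) * ?t\<bar>"
    then have "(\<bar>b\<bar> / 2)\<^sup>2 \<le> \<bar>b - sgn (z 0) * ?t\<bar>\<^sup>2" by (intro power_mono) auto
    then show ?thesis by (simp add: add_increasing2)
  next
    assume "\<bar>b\<bar> / 2 \<le> ?w"
    then have "(\<bar>b\<bar> / 2)\<^sup>2 \<le> ?w\<^sup>2" by (intro power_mono) auto
    then show ?thesis by (simp add: add_increasing)
  qed
  also have "?w\<^sup>2 \<le> ?spurious"
    using assms(1) by (intro member_le_sum) auto
  finally have "(\<bar>b\<bar> / 2)\<^sup>2 \<le> (b - sgn (z 0) * ?t)\<^sup>2 + ?spurious" by simp
  then have "(1 / real n) * (\<bar>b\<bar> / 2)\<^sup>2 \<le> (1 / real n) * ((b - sgn (z 0) * ?t)\<^sup>2 + ?spurious)"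
    by (intro mult_left_mono) auto
  then show ?thesis
    by (simp add: loss_p_def distrib_left power_divide)
qed

lemma Inf_loss_p_pos:
  fixes z :: "nat \<Rightarrow> real"
  assumes "0 < n" and "b \<noteq> 0" and "1 < p" and "\<bar>z 0\<bar> \<le> \<bar>z 1\<bar>"
  shows "0 < Inf (loss_p n p b z ` {0..})"
proof -
  have "b\<^sup>2 / (4 * real n) \<le> Inf (loss_p n p b z ` {0..})"
    using loss_p_ge[OF assms(3,4)] by (intro cInf_greatest) auto
  moreover have "0 < b\<^sup>2 / (4 * real n)" using assms(1,2) by simp
  ultimately show ?thesis by linarith
qed

lemma ext_ratio_Inf_losses_eq_top:
  fixes z :: "nat \<Rightarrow> real"
  assumes "0 < n" and "b \<noteq> 0" and "1 < p"
    and "sgn (z 0) = sgn b" and "\<bar>b\<bar> \<le> \<bar>z 0\<bar>" and "\<bar>z 0\<bar> \<le> \<bar>z 1\<bar>"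
  shows "ext_ratio (Inf (loss_p n p b z ` {0..})) (Inf (loss_1 n b z ` {0..})) = \<infinity>"
  using Inf_loss_p_pos[OF assms(1-3,6)] Inf_loss_1_eq_0[of z b, OF assms(4,5)]
  by (simp add: ext_ratio_def)

lemma sgn_abs_bounds_near:
  fixes b u v :: real
  assumes "\<bar>u - 2 * b\<bar> \<le> \<bar>b\<bar> / 2" and "\<bar>v - 3 * \<bar>b\<bar>\<bar> \<le> \<bar>b\<bar> / 2" and "b \<noteq> 0"
  shows "sgn u = sgn b" and "\<bar>b\<bar> \<le> \<bar>u\<bar>" and "\<bar>u\<bar> \<le> \<bar>v\<bar>"
  using assms by (auto simp: sgn_if abs_if split: if_splits)

lemma abs_sum_mult_diff_le:
  fixes a x y :: "'i \<Rightarrow> real"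
  assumes "\<And>i. i \<in> A \<Longrightarrow> \<bar>x i - y i\<bar> \<le> \<delta>"
  shows "\<bar>(\<Sum>i\<in>A. a i * x i) - (\<Sum>i\<in>A. a i * y i)\<bar> \<le> \<delta> * (\<Sum>i\<in>A. \<bar>a i\<bar>)"
proof -
  have "\<bar>(\<Sum>i\<in>A. a i * x i) - (\<Sum>i\<in>A. a i * y i)\<bar> = \<bar>\<Sum>i\<in>A. a i * (x i - y i)\<bar>"
    by (simp add: sum_subtractf right_diff_distrib)
  also have "\<dots> \<le> (\<Sum>i\<in>A. \<bar>a i\<bar> * \<bar>x i - y i\<bar>)"
    by (rule order_trans[OF sum_abs]) (simp add: abs_mult)
  also have "\<dots> \<le> (\<Sum>i\<in>A. \<bar>a i\<bar> * \<delta>)"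
    using assms by (intro sum_mono mult_left_mono) auto
  finally show ?thesis by (simp add: sum_distrib_left mult.commute)
qed

definition lasso_z :: "nat \<Rightarrow> nat \<Rightarrow> (nat \<Rightarrow> nat \<Rightarrow> real) \<Rightarrow> real \<Rightarrow> (nat \<Rightarrow> real) \<Rightarrow> nat \<Rightarrow> real"
  where "lasso_z n p X \<beta>1 \<epsilon> =
    (\<lambda>j. \<Sum>i<n. X i j * ((\<Sum>k<p. X i k * (if k = 0 then \<beta>1 else 0)) + \<epsilon> i))"

lemma lasso_z_eq:
  assumes "0 < p"
  shows "lasso_z n p X \<beta>1 \<epsilon> j = \<beta>1 * (\<Sum>i<n. X i j * X i 0) + (\<Sum>i<n. X i j * \<epsilon> i)"
proof -
  have "(\<Sum>k<p. X i k * (if k = 0 then \<beta>1 else 0)) = X i 0 * \<beta>1" for i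
    using assms by (simp add: if_distrib[of "(*) (X i _)"] cong: if_cong)
  then show ?thesis
    by (simp add: lasso_z_def distrib_left sum.distrib sum_distrib_left mult_ac)
qed

lemma lasso_ratio_top_on_box:
  fixes X :: "nat \<Rightarrow> nat \<Rightarrow> real" and \<beta>1 :: real
  assumes "1 < p" and "p \<le> n"
    and orth: "\<forall>j<p. \<forall>k<p. (\<Sum>i<n. X i j * X i k) = (if j = k then 1 else 0)"
    and "\<beta>1 \<noteq> 0"
  obtains e :: "nat \<Rightarrow> real" and \<delta> :: real where "0 < \<delta>"
    and "\<And>\<epsilon>. \<epsilon> \<in> PiE {..<n} (\<lambda>i. {e i - \<delta> <..< e i + \<delta>}) \<Longrightarrow>
           ext_ratio (Inf (loss_p n p \<beta>1 (lasso_z n p X \<beta>1 \<epsilon>) ` {0..}))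
                     (Inf (loss_1 n \<beta>1 (lasso_z n p X \<beta>1 \<epsilon>) ` {0..})) = \<infinity>"
proof
  define e where "e i = \<beta>1 * X i 0 + 3 * \<bar>\<beta>1\<bar> * X i 1" for i
  define S where "S = (\<Sum>i<n. \<bar>X i 0\<bar>) + (\<Sum>i<n. \<bar>X i 1\<bar>)"
  define \<delta> where "\<delta> = \<bar>\<beta>1\<bar> / (2 * (S + 1))"
  have S_nonneg: "0 \<le> S" unfolding S_def by (intro add_nonneg_nonneg sum_nonneg) auto
  show "0 < \<delta>" unfolding \<delta>_def using S_nonneg assms(4) by simp
  have \<delta>_S: "\<delta> * (\<Sum>i<n. \<bar>X i j\<bar>) \<le> \<bar>\<beta>1\<bar> / 2" if "j = 0 \<or> j = 1" for j
  proof -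
    have "\<delta> * (\<Sum>i<n. \<bar>X i j\<bar>) \<le> \<delta> * (S + 1)"
      using that \<open>0 < \<delta>\<close> by (intro mult_left_mono) (auto simp: S_def sum_nonneg)
    also have "\<dots> = \<bar>\<beta>1\<bar> / 2" unfolding \<delta>_def using S_nonneg by (simp add: field_simps)
    finally show ?thesis .
  qed
  have gram: "(\<Sum>i<n. X i 0 * X i 0) = 1" "(\<Sum>i<n. X i 0 * X i 1) = 0"
    "(\<Sum>i<n. X i 1 * X i 0) = 0" "(\<Sum>i<n. X i 1 * X i 1) = 1"
    using orth assms(1) by auto
  have z_center: "(\<Sum>i<n. X i 0 * e i) = \<beta>1" "(\<Sum>i<n. X i 1 * e i) = 3 * \<bar>\<beta>1\<bar>"
    using gram by (simp_all add: e_def distrib_left sum.distrib sum_distrib_left[symmetric] mult_ac)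
  fix \<epsilon> assume \<epsilon>: "\<epsilon> \<in> PiE {..<n} (\<lambda>i. {e i - \<delta> <..< e i + \<delta>})"
  let ?z = "lasso_z n p X \<beta>1 \<epsilon>"
  have \<epsilon>_close: "\<bar>\<epsilon> i - e i\<bar> \<le> \<delta>" if "i \<in> {..<n}" for i
    using PiE_mem[OF \<epsilon> that] by (auto simp: abs_le_iff)
  have dev: "\<bar>(\<Sum>i<n. X i j * \<epsilon> i) - (\<Sum>i<n. X i j * e i)\<bar> \<le> \<bar>\<beta>1\<bar> / 2"
    if "j = 0 \<or> j = 1" for j
    using abs_sum_mult_diff_le[of "{..<n}" \<epsilon> e \<delta> "\<lambda>i. X i j", OF \<epsilon>_close] \<delta>_S[OF that] by linarith
  have "?z 0 - 2 * \<beta>1 = (\<Sum>i<n. X i 0 * \<epsilon> i) - (\<Sum>i<n. X i 0 * e i)"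
    "?z 1 - 3 * \<bar>\<beta>1\<bar> = (\<Sum>i<n. X i 1 * \<epsilon> i) - (\<Sum>i<n. X i 1 * e i)"
    using lasso_z_eq[of p] assms(1) gram z_center by simp_all
  then have "\<bar>?z 0 - 2 * \<beta>1\<bar> \<le> \<bar>\<beta>1\<bar> / 2" "\<bar>?z 1 - 3 * \<bar>\<beta>1\<bar>\<bar> \<le> \<bar>\<beta>1\<bar> / 2"
    using dev[of 0] dev[of 1] by simp_all
  note near = sgn_abs_bounds_near[OF this assms(4)]
  show "ext_ratio (Inf (loss_p n p \<beta>1 ?z ` {0..})) (Inf (loss_1 n \<beta>1 ?z ` {0..})) = \<infinity>"
    using assms(1,2,4) near by (intro ext_ratio_Inf_losses_eq_top) auto
qed

lemma emeasure_density_lborel_interval_pos: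
  fixes f :: "real \<Rightarrow> real"
  assumes "f \<in> borel_measurable borel" and "\<And>x. 0 < f x" and "a < b"
  shows "emeasure (density lborel f) {a<..<b} \<noteq> 0"
proof
  assume "emeasure (density lborel f) {a<..<b} = 0"
  then have "(\<integral>\<^sup>+ x. ennreal (f x) * indicator {a<..<b} x \<partial>lborel) = 0"
    using assms(1) by (subst (asm) emeasure_density) auto
  then have "AE x in lborel. ennreal (f x) * indicator {a<..<b} x = 0"
    using assms(1) by (subst (asm) nn_integral_0_iff_AE) auto
  then have "AE x in lborel. x \<notin> {a<..<b}"
  proof eventually_elim
    case (elim x)
    then show ?case using assms(2)[of x] by (auto split: split_indicator)
  qed
  then have "emeasure lborel {a<..<b} = 0"
    by (subst (asm) AE_iff_measurable[where N="{a<..<b}"]) auto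
  then show False using assms(3) by simp
qed

lemma emeasure_PiM_normal_box_pos:
  fixes n :: nat and e :: "nat \<Rightarrow> real" and \<sigma> :: real
  assumes "0 < \<sigma>" and "0 < \<delta>"
  shows "emeasure (PiM {..<n} (\<lambda>i. density lborel (normal_density 0 \<sigma>)))
           (PiE {..<n} (\<lambda>i. {e i - \<delta> <..< e i + \<delta>})) \<noteq> 0"
proof -
  interpret product_sigma_finite "\<lambda>i. density lborel (normal_density 0 \<sigma>)"
    using prob_space_imp_sigma_finite[OF prob_space_normal_density[OF assms(1)]]
    by (simp add: product_sigma_finite_def)
  have "\<And>i. emeasure (density lborel (normal_density 0 \<sigma>)) {e i - \<delta> <..< e i + \<delta>} \<noteq> 0"
    using assms by (intro emeasure_density_lborel_interval_pos normal_density_pos) auto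
  moreover have "emeasure (PiM {..<n} (\<lambda>i. density lborel (normal_density 0 \<sigma>)))
      (PiE {..<n} (\<lambda>i. {e i - \<delta> <..< e i + \<delta>}))
    = (\<Prod>i<n. emeasure (density lborel (normal_density 0 \<sigma>)) {e i - \<delta> <..< e i + \<delta>})"
    by (rule emeasure_PiM) auto
  ultimately show ?thesis by simp
qed

lemma nn_integral_eq_top_if_top_on_pos_set:
  assumes "B \<in> sets M" and "emeasure M B \<noteq> 0" and "\<And>x. x \<in> B \<Longrightarrow> f x = \<infinity>"
  shows "(\<integral>\<^sup>+ x. f x \<partial>M) = \<infinity>"
proof -
  have "(\<integral>\<^sup>+ x. \<infinity> * indicator B x \<partial>M) \<le> (\<integral>\<^sup>+ x. f x \<partial>M)"
    using assms(3) by (intro nn_integral_mono) (auto split: split_indicator)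
  moreover have "(\<integral>\<^sup>+ x. \<infinity> * indicator B x \<partial>M) = \<infinity>"
    using assms(1,2) by (simp add: nn_integral_cmult_indicator)
  ultimately show ?thesis by (simp add: top_unique)
qed

theorem proposition2p5:
  fixes n p :: nat and X :: "nat \<Rightarrow> nat \<Rightarrow> real" and \<beta>1 \<sigma> :: real
  assumes "1 < p" and "p \<le> n"
    and "\<forall>j<p. \<forall>k<p. (\<Sum>i<n. X i j * X i k) = (if j = k then 1 else 0)"
    and "\<beta>1 \<noteq> 0" and "\<sigma> > 0"
  shows "(\<integral>\<^sup>+ \<epsilon>. ext_ratio
            (Inf ((loss_p n p \<beta>1
                    (\<lambda>j. \<Sum>i<n. X i j * ((\<Sum>k<p. X i k * (if k = 0 then \<beta>1 else 0)) + \<epsilon> i))) ` {0..}))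
            (Inf ((loss_1 n \<beta>1
                    (\<lambda>j. \<Sum>i<n. X i j * ((\<Sum>k<p. X i k * (if k = 0 then \<beta>1 else 0)) + \<epsilon> i))) ` {0..}))
          \<partial>(PiM {..<n} (\<lambda>i. density lborel (normal_density 0 \<sigma>)))) = \<infinity>"
proof -
  obtain e \<delta> where "0 < \<delta>" and top_on_box:
    "\<And>\<epsilon>. \<epsilon> \<in> PiE {..<n} (\<lambda>i. {e i - \<delta> <..< e i + \<delta>}) \<Longrightarrow>
       ext_ratio (Inf (loss_p n p \<beta>1 (lasso_z n p X \<beta>1 \<epsilon>) ` {0..}))
                 (Inf (loss_1 n \<beta>1 (lasso_z n p X \<beta>1 \<epsilon>) ` {0..})) = \<infinity>"
    using lasso_ratio_top_on_box[OF assms(1-4)] by blast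
  have "(\<integral>\<^sup>+ \<epsilon>. ext_ratio (Inf (loss_p n p \<beta>1 (lasso_z n p X \<beta>1 \<epsilon>) ` {0..}))
                          (Inf (loss_1 n \<beta>1 (lasso_z n p X \<beta>1 \<epsilon>) ` {0..}))
          \<partial>(PiM {..<n} (\<lambda>i. density lborel (normal_density 0 \<sigma>)))) = \<infinity>"
  proof (rule nn_integral_eq_top_if_top_on_pos_set[OF _ _ top_on_box])
    show "PiE {..<n} (\<lambda>i. {e i - \<delta> <..< e i + \<delta>})
            \<in> sets (PiM {..<n} (\<lambda>i. density lborel (normal_density 0 \<sigma>)))"
      by (rule sets_PiM_I_finite) auto
  qed (use emeasure_PiM_normal_box_pos[OF assms(5) \<open>0 < \<delta>\<close>] in auto)
  then show ?thesis unfolding lasso_z_def .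
qed

end
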